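(* Let $h,n\geq 2$ and let $V\leq S_h$ contain a complete intransitive subgroup of $S_h$ in $k$ blocks, for some $2\leq k\leq\min\{h,n!\}$. Then $V\times\{id\}$ is an anonymity group with respect to $(h,n)$.
   Context: For a partition $\{H_1,\dots,H_k\}$ of $H=[h]$ into $k$ nonempty parts, the subgroup $S_{H_1}\times\cdots\times S_{H_k}\leq S_h$ (permutations preserving each $H_i$) is called a complete intransitive subgroup of $S_h$ in $k$ blocks. Permutations compose as $(\sigma\tau)(x)=\sigma(\tau(x))$. Let $G=S_h\times S_n$ and $\mathcal{P}=(S_n)^h$ (preference profiles), with action $(p^{(\varphi,\psi)})_i=\psi\,p_{\varphi^{-1}(i)}$. A social preference function (SPF) is any $F:\mathcal{P}\to S_n$; its symmetry group is $G(F)=\{(\varphi,\psi)\in G: F(p^{(\varphi,\psi)})=\psi F(p)\ \forall p\}$ and its anonymity group is $G_1(F)=G(F)\cap(S_h\times\{id\})$. A subgroup $U\leq S_h\times\{id\}$ is an anonymity group with respect to $(h,n)$ if $U=G_1(F)$ for some SPF $F$. *)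

theory Defs
  imports "HOL-Algebra.Sym_Groups" "HOL-Library.Disjoint_Sets"
begin

(* Voters H = [h] = {1..h}, alternatives [n] = {1..n}.  S_m = carrier (sym_group m),
   permutations of {1..m} (identity outside), composition (\<circ>). *)

type_synonym perm = "nat \<Rightarrow> nat"
type_synonym profile = "nat \<Rightarrow> perm"

(* preference profiles (S_n)^h, stored extensionally: p i = id for i outside {1..h} *)
definition profiles :: "nat \<Rightarrow> nat \<Rightarrow> profile set" where
  "profiles h n = {p. (\<forall>i\<in>{1..h}. p i \<in> carrier (sym_group n)) \<and> (\<forall>i. i \<notin> {1..h} \<longrightarrow> p i = id)}"

definition act :: "nat \<Rightarrow> perm \<Rightarrow> perm \<Rightarrow> profile \<Rightarrow> profile" where
  "act h f g p = (\<lambda>i. if i \<in> {1..h} then g \<circ> p (Hilbert_Choice.inv f i) else id)"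

definition is_SPF :: "nat \<Rightarrow> nat \<Rightarrow> (profile \<Rightarrow> perm) \<Rightarrow> bool" where
  "is_SPF h n F \<longleftrightarrow> (\<forall>p\<in>profiles h n. F p \<in> carrier (sym_group n))"

definition symmetry_group :: "nat \<Rightarrow> nat \<Rightarrow> (profile \<Rightarrow> perm) \<Rightarrow> (perm \<times> perm) set" where
  "symmetry_group h n F = {(f, g). f \<in> carrier (sym_group h) \<and> g \<in> carrier (sym_group n) \<and>
      (\<forall>p\<in>profiles h n. F (act h f g p) = g \<circ> F p)}"

definition anonymity_group_of :: "nat \<Rightarrow> nat \<Rightarrow> (profile \<Rightarrow> perm) \<Rightarrow> (perm \<times> perm) set" where
  "anonymity_group_of h n F = symmetry_group h n F \<inter> (carrier (sym_group h) \<times> {id})"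

definition is_anonymity_group :: "nat \<Rightarrow> nat \<Rightarrow> (perm \<times> perm) set \<Rightarrow> bool" where
  "is_anonymity_group h n U \<longleftrightarrow> (\<exists>F. is_SPF h n F \<and> U = anonymity_group_of h n F)"

(* complete intransitive subgroup S_{H_1} x ... x S_{H_k} for a partition P of {1..h} *)
definition complete_intransitive :: "nat \<Rightarrow> nat set set \<Rightarrow> perm set" where
  "complete_intransitive h P = {f. f \<in> carrier (sym_group h) \<and> (\<forall>B\<in>P. f ` B = B)}"

end

theory Submission
  imports Defs
begin

(* Colour the blocks of the partition by pairwise distinct rankings, which is possible
   since there are at most n! blocks, and let p0 give every voter the colour of its block.
   A voter permutation fixing p0 then maps every block onto itself, so the stabiliser of
   p0 lies in the complete intransitive subgroup and hence in V.  The SPF that ranks by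
   the identity exactly on the V-orbit of p0, and by a fixed transposition elsewhere, is
   invariant under V, and any voter permutation f under which it is invariant sends p0
   into that orbit, say to v p0; then v^-1 f stabilises p0, so f lies in V. *)

lemma subgroup_sym_group_permutes:
  "subgroup V (sym_group h) \<Longrightarrow> v \<in> V \<Longrightarrow> v permutes {1..h}"
  using subgroup.subset sym_group_carrier by blast

lemma subgroup_sym_group_comp_closed:
  "subgroup V (sym_group h) \<Longrightarrow> f \<in> V \<Longrightarrow> g \<in> V \<Longrightarrow> f \<circ> g \<in> V"
  by (metis subgroup.m_closed sym_group_mult)

lemma subgroup_sym_group_inv_closed:
  "subgroup V (sym_group h) \<Longrightarrow> f \<in> V \<Longrightarrow> inv' f \<in> V"
  by (metis subgroup.m_inv_closed subgroup.mem_carrier sym_group_inv_equality)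

lemma act_id_id:
  "p \<in> profiles h n \<Longrightarrow> act h id id p = p"
  unfolding act_def profiles_def by (auto simp: inv_id)

lemma act_comp:
  assumes "f permutes {1..h}" and "g permutes {1..h}"
  shows "act h f id (act h g id p) = act h (f \<circ> g) id p"
proof -
  have inv_comp: "inv' (f \<circ> g) = inv' g \<circ> inv' f"
    using o_inv_distrib assms permutes_bij by blast
  show ?thesis
  proof
    fix i
    show "act h f id (act h g id p) i = act h (f \<circ> g) id p i"
      using permutes_in_image[OF permutes_inv[OF assms(1)], of i] inv_comp by (auto simp: act_def)
  qed
qed

lemma act_inv_act:
  assumes "p \<in> profiles h n" and "f permutes {1..h}"
  shows "act h (inv' f) id (act h f id p) = p"
proof -
  have "act h (inv' f) id (act h f id p) = act h (inv' f \<circ> f) id p"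
    using act_comp[OF permutes_inv[OF assms(2)] assms(2)] .
  also have "\<dots> = p"
    using act_id_id[OF assms(1)] by (simp add: permutes_inv_o(2)[OF assms(2)])
  finally show ?thesis .
qed

definition voter_orbit :: "nat \<Rightarrow> perm set \<Rightarrow> profile \<Rightarrow> profile set" where
  "voter_orbit h V p0 = (\<lambda>v. act h v id p0) ` V"

lemma act_in_voter_orbit_iff:
  assumes V: "subgroup V (sym_group h)" and "f \<in> V" and p: "p \<in> profiles h n"
  shows "act h f id p \<in> voter_orbit h V p0 \<longleftrightarrow> p \<in> voter_orbit h V p0"
proof
  assume "act h f id p \<in> voter_orbit h V p0"
  then obtain v where v: "v \<in> V" "act h f id p = act h v id p0"
    unfolding voter_orbit_def by blast
  have f: "f permutes {1..h}" using subgroup_sym_group_permutes[OF V \<open>f \<in> V\<close>] .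
  have "p = act h (inv' f) id (act h v id p0)"
    using act_inv_act[OF p f] v(2) by simp
  also have "\<dots> = act h (inv' f \<circ> v) id p0"
    using act_comp permutes_inv[OF f] subgroup_sym_group_permutes[OF V v(1)] by blast
  finally show "p \<in> voter_orbit h V p0"
    unfolding voter_orbit_def
    using subgroup_sym_group_comp_closed[OF V subgroup_sym_group_inv_closed[OF V \<open>f \<in> V\<close>] v(1)]
    by blast
next
  assume "p \<in> voter_orbit h V p0"
  then obtain v where v: "v \<in> V" "p = act h v id p0"
    unfolding voter_orbit_def by blast
  then have "act h f id p = act h (f \<circ> v) id p0"
    using act_comp subgroup_sym_group_permutes[OF V] \<open>f \<in> V\<close> by blast
  then show "act h f id p \<in> voter_orbit h V p0"
    unfolding voter_orbit_def using subgroup_sym_group_comp_closed[OF V \<open>f \<in> V\<close> v(1)] by blast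
qed

lemma mem_subgroup_if_act_in_voter_orbit:
  assumes V: "subgroup V (sym_group h)" and p0: "p0 \<in> profiles h n"
    and stab: "\<And>g. g permutes {1..h} \<Longrightarrow> act h g id p0 = p0 \<Longrightarrow> g \<in> V"
    and f: "f permutes {1..h}" and orb: "act h f id p0 \<in> voter_orbit h V p0"
  shows "f \<in> V"
proof -
  obtain v where v: "v \<in> V" "act h f id p0 = act h v id p0"
    using orb unfolding voter_orbit_def by blast
  have v_perm: "v permutes {1..h}" using subgroup_sym_group_permutes[OF V v(1)] .
  have "act h (inv' v \<circ> f) id p0 = act h (inv' v) id (act h v id p0)"
    using act_comp[OF permutes_inv[OF v_perm] f] v(2) by metis
  also have "\<dots> = p0" using act_inv_act[OF p0 v_perm] .
  finally have "inv' v \<circ> f \<in> V"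
    using stab permutes_compose[OF f permutes_inv[OF v_perm]] by blast
  then have "v \<circ> (inv' v \<circ> f) \<in> V" using subgroup_sym_group_comp_closed[OF V v(1)] by blast
  then show "f \<in> V" by (simp add: o_assoc permutes_inv_o(1)[OF v_perm])
qed

lemma anonymity_group_of_voter_orbit_indicator:
  assumes V: "subgroup V (sym_group h)" and p0: "p0 \<in> profiles h n"
    and stab: "\<And>g. g permutes {1..h} \<Longrightarrow> act h g id p0 = p0 \<Longrightarrow> g \<in> V"
    and "\<tau> \<noteq> id"
  shows "anonymity_group_of h n (\<lambda>p. if p \<in> voter_orbit h V p0 then id else \<tau>) = V \<times> {id}"
    (is "anonymity_group_of h n ?F = _")
proof
  show "V \<times> {id} \<subseteq> anonymity_group_of h n ?F"
    unfolding anonymity_group_of_def symmetry_group_def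
    using subgroup_sym_group_permutes[OF V] act_in_voter_orbit_iff[OF V]
    by (auto simp: sym_group_carrier permutes_id)
next
  show "anonymity_group_of h n ?F \<subseteq> V \<times> {id}"
  proof
    fix x assume "x \<in> anonymity_group_of h n ?F"
    then obtain f where x: "x = (f, id)" and f: "f permutes {1..h}"
      and invariant: "\<forall>p\<in>profiles h n. ?F (act h f id p) = ?F p"
      unfolding anonymity_group_of_def symmetry_group_def sym_group_carrier by auto
    have "p0 \<in> voter_orbit h V p0"
      unfolding voter_orbit_def using act_id_id[OF p0] subgroup.one_closed[OF V]
      by (metis image_eqI sym_group_one)
    then have "act h f id p0 \<in> voter_orbit h V p0"
      using invariant p0 \<open>\<tau> \<noteq> id\<close> by (metis (full_types))
    then show "x \<in> V \<times> {id}"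
      using mem_subgroup_if_act_in_voter_orbit[OF V p0 stab f] x by simp
  qed
qed

lemma is_anonymity_group_if_stabilizer_subset:
  assumes "n \<ge> 2" and V: "subgroup V (sym_group h)" and p0: "p0 \<in> profiles h n"
    and stab: "\<And>g. g permutes {1..h} \<Longrightarrow> act h g id p0 = p0 \<Longrightarrow> g \<in> V"
  shows "is_anonymity_group h n (V \<times> {id})"
proof -
  define \<tau> where "\<tau> = Transposition.transpose (1::nat) 2"
  have \<tau>_perm: "\<tau> permutes {1..n}"
    unfolding \<tau>_def using \<open>n \<ge> 2\<close> by (intro permutes_swap_id) auto
  have "\<tau> 1 = 2" unfolding \<tau>_def by simp
  then have "\<tau> \<noteq> id" by auto
  let ?F = "\<lambda>p. if p \<in> voter_orbit h V p0 then id else \<tau>"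
  have "is_SPF h n ?F"
    unfolding is_SPF_def using \<tau>_perm by (simp add: sym_group_carrier permutes_id)
  then show ?thesis
    unfolding is_anonymity_group_def
    using anonymity_group_of_voter_orbit_indicator[OF V p0 stab \<open>\<tau> \<noteq> id\<close>] by metis
qed

lemma permutes_image_block_eq:
  assumes P: "partition_on A P" and \<sigma>: "\<sigma> permutes A"
    and sub: "\<And>B. B \<in> P \<Longrightarrow> \<sigma> ` B \<subseteq> B" and "B \<in> P"
  shows "\<sigma> ` B = B"
proof
  show "B \<subseteq> \<sigma> ` B"
  proof
    fix x assume "x \<in> B"
    then have "inv' \<sigma> x \<in> A"
      using P \<open>B \<in> P\<close> permutes_in_image[OF permutes_inv[OF \<sigma>]] partition_onD1 by blast
    then obtain B' where B': "B' \<in> P" "inv' \<sigma> x \<in> B'" using partition_onD1[OF P] by blast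
    then have "x \<in> B'" using sub permutes_inverses(1)[OF \<sigma>] by (metis image_subset_iff)
    then have "B' = B"
      using partition_onD2[OF P] B'(1) \<open>B \<in> P\<close> \<open>x \<in> B\<close> by (auto simp: disjoint_def)
    then show "x \<in> \<sigma> ` B" using B'(2) permutes_inverses(1)[OF \<sigma>] by (metis image_eqI)
  qed
qed (use sub \<open>B \<in> P\<close> in blast)

lemma block_colouring_profile_exists:
  assumes P: "partition_on {1..h} P" and c: "c ` P \<subseteq> carrier (sym_group n)"
  shows "\<exists>p0\<in>profiles h n. \<forall>B\<in>P. \<forall>i\<in>B. p0 i = c B"
proof -
  define blk where "blk i = (SOME B. B \<in> P \<and> i \<in> B)" for i
  have blk: "blk i \<in> P \<and> i \<in> blk i" if "i \<in> {1..h}" for i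
    unfolding blk_def using that partition_onD1[OF P] by (metis (mono_tags, lifting) UnionE someI)
  have blk_eq: "blk i = B" if "B \<in> P" "i \<in> B" for i B
  proof -
    have "i \<in> {1..h}" using that partition_onD1[OF P] by blast
    then show ?thesis using blk[of i] that partition_onD2[OF P] by (metis disjointD disjoint_iff)
  qed
  define p0 where "p0 i = (if i \<in> {1..h} then c (blk i) else id)" for i
  have "p0 \<in> profiles h n"
    unfolding profiles_def p0_def using c blk by fastforce
  moreover have "\<forall>B\<in>P. \<forall>i\<in>B. p0 i = c B"
    unfolding p0_def using blk_eq partition_onD1[OF P] by auto
  ultimately show ?thesis by blast
qed

lemma stabilizer_block_colouring_subset_complete_intransitive:
  assumes P: "partition_on {1..h} P" and c: "inj_on c P"
    and p0: "\<And>B i. B \<in> P \<Longrightarrow> i \<in> B \<Longrightarrow> p0 i = c B"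
    and g: "g permutes {1..h}" and fix_p0: "act h g id p0 = p0"
  shows "g \<in> complete_intransitive h P"
proof -
  have inv_g_sub: "inv' g ` B \<subseteq> B" if "B \<in> P" for B
  proof
    fix y assume "y \<in> inv' g ` B"
    then obtain i where i: "i \<in> B" "y = inv' g i" by blast
    have "i \<in> {1..h}" using i(1) \<open>B \<in> P\<close> partition_onD1[OF P] by blast
    then have "y \<in> {1..h}" using i(2) permutes_in_image[OF permutes_inv[OF g]] by simp
    then obtain B' where B': "B' \<in> P" "y \<in> B'" using partition_onD1[OF P] by blast
    have "p0 y = p0 i"
      using fun_cong[OF fix_p0, of i] \<open>i \<in> {1..h}\<close> i(2) by (simp add: act_def)
    then have "c B' = c B" using p0 B' i(1) \<open>B \<in> P\<close> by simp
    then show "y \<in> B" using inj_onD[OF c] B' \<open>B \<in> P\<close> by blast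
  qed
  have "g ` B = B" if "B \<in> P" for B
  proof -
    have "inv' g ` B = B"
      using permutes_image_block_eq[OF P permutes_inv[OF g] inv_g_sub that] .
    then have "g ` inv' g ` B = g ` B" by simp
    then show ?thesis by (simp add: image_comp permutes_inv_o(1)[OF g])
  qed
  then show ?thesis
    unfolding complete_intransitive_def using g sym_group_carrier by blast
qed

theorem mainTheorem3:
  fixes h n k :: nat and V :: "perm set" and P :: "nat set set"
  assumes "h \<ge> 2" and "n \<ge> 2"
    and "subgroup V (sym_group h)"
    and "partition_on {1..h} P" and "card P = k"
    and "2 \<le> k" and "k \<le> min h (fact n)"
    and "complete_intransitive h P \<subseteq> V"
  shows "is_anonymity_group h n (V \<times> {id})"
proof -
  have "finite P" using assms(5,6) by (intro card_ge_0_finite) linarith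
  moreover have "finite (carrier (sym_group n))"
    using finite_permutations[of "{1..n}"] by (simp add: sym_group_def)
  moreover have "card P \<le> card (carrier (sym_group n))"
    using assms(5,7) by (simp add: sym_group_card_carrier)
  ultimately obtain c where c: "c ` P \<subseteq> carrier (sym_group n)" "inj_on c P"
    by (meson card_le_inj)
  obtain p0 where p0: "p0 \<in> profiles h n" "\<forall>B\<in>P. \<forall>i\<in>B. p0 i = c B"
    using block_colouring_profile_exists[OF assms(4) c(1)] by blast
  have stab: "g \<in> V" if "g permutes {1..h}" "act h g id p0 = p0" for g
    using stabilizer_block_colouring_subset_complete_intransitive[OF assms(4) c(2) p0(2)[rule_format] that]
      assms(8) by blast
  show ?thesis using is_anonymity_group_if_stabilizer_subset[OF assms(2,3) p0(1) stab] .
qed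

end
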